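(* Let $q\in(0,1]$ and $m>0$. Suppose that $\sup_{T\in\mathbb T}E[|\hat u_T|^m]<\infty$ where $\hat u_T=a_T^{-1}(\hat\theta_T-\theta^* )$, that [A6] holds (for every $j\in\mathcal J^{(0)}$, $(\xi_T^j)^{-1/q}|\alpha_T^j|^{-1}\to0$ in probability), and that as $T\to\infty$ $$(\tilde a_T^{(00)})^{-1}(\hat\theta_T^{(0)}-\theta^{*(0)})\to0\ \text{in probability},\qquad (\tilde a_T^{(11)})^{-1}(\hat\theta_T^{(1)}-\theta^{*(1)})\to(\Gamma^{(11)})^{-1}(\Delta^{(1)}-\psi^{(1)})\ \text{in distribution},$$ where $\Delta$ is a random vector in $\mathbb R^{\mathsf p}$, $\Gamma$ an almost surely positive definite random $\mathsf p\times\mathsf p$ matrix, and $\psi^{(1)}\in\mathbb R^{|\mathcal J^{(1)}|}$ a vector. Let $\tilde u_\infty\in\mathbb R^{\mathsf p}$ be the random vector with $\tilde u_\infty^{(0)}=0$ and $\tilde u_\infty^{(1)}=(\Gamma^{(11)})^{-1}(\Delta^{(1)}-\psi^{(1)})$. Then $$E[f(\hat u_T)]\to E[f(\tilde u_\infty)]\quad (T\to\infty)$$ for every continuous $f:\mathbb R^{\mathsf p}\to\mathbb R$ with $\limsup_{|u|\to\infty}|f(u)||u|^{-m}=0$.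
   Context: Let $\Theta\subset\mathbb R^{\mathsf p}$ be a bounded open set with closure $\overline\Theta$ and $\theta^*\in\Theta$. Let $(\Omega,\mathcal F,P)$ be a probability space, $\mathbb T\subset\mathbb R_{\ge0}$ with $\sup\mathbb T=\infty$; limits $T\to\infty$ are along $\mathbb T$. For each $T\in\mathbb T$, $\mathbb H_T:\Omega\times\overline\Theta\to\mathbb R$ is a random field continuous in $\theta$ for every $\omega$. The penalty is $p_T(\theta)=\sum_{j=1}^{\mathsf p}\xi_T^jp(\theta_j)$ with (possibly random) $\xi_T^j>0$ and $p:\mathbb R\to\mathbb R_{\ge0}$, $p(0)=0$; $\mathbb H^\dagger_T=\mathbb H_T-p_T$, and $\hat\theta_T:\Omega\to\overline\Theta$ is measurable with $\mathbb H^\dagger_T(\hat\theta_T)=\max_{\overline\Theta}\mathbb H^\dagger_T$. $\mathcal J^{(0)}=\{j:\theta^*_j=0\}$, $\mathcal J^{(1)}=\{j:\theta^*_j\ne0\}$; $x^{(k)}=(x_j)_{j\in\mathcal J^{(k)}}$, $A^{(kl)}=(A_{ij})_{i\in\mathcal J^{(k)},j\in\mathcal J^{(l)}}$. $a_T=\mathrm{diag}(\alpha_T^1,\dots,\alpha_T^{\mathsf p})$ is deterministic, invertible, with $\|a_T\|\to0$. $\tilde a_T$ is diagonal with $(\tilde a_T)_{jj}=(\xi_T^j)^{-1/q}$ for $j\in\mathcal J^{(0)}$ and $\alpha_T^j$ for $j\in\mathcal J^{(1)}$. *)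

theory Defs
  imports "HOL-Probability.Probability"
begin

definition along :: "real set \<Rightarrow> real filter" where
  "along TT = at_top \<sqinter> principal TT"

text \<open>Coordinate projection onto the index set J (the components outside J are set to 0);
  this is how a subvector x^(J) is embedded into the full space.\<close>
definition proj :: "'p set \<Rightarrow> real^'p \<Rightarrow> real^'p" where
  "proj J x = (\<chi> j. if j \<in> J then x $ j else 0)"

text \<open>(A^(JJ))^(-1) w^(J), embedded with zeros outside J.  The block-diagonal matrix
  diag(A^(JJ), I) is inverted; if it is not invertible (a null event in our use)
  the value is 0 by convention.\<close>
definition block_inv_apply :: "'p set \<Rightarrow> real^'p^'p \<Rightarrow> real^'p \<Rightarrow> real^'p" where
  "block_inv_apply J A w =
     (let B = (\<chi> i k. if i \<in> J \<and> k \<in> J then A $ i $ k else if i = k then 1 else 0)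
      in if invertible B then matrix_inv B *v proj J w else 0)"

definition conv_in_prob :: "'a measure \<Rightarrow> 'i filter \<Rightarrow> ('i \<Rightarrow> 'a \<Rightarrow> 'b::metric_space) \<Rightarrow> 'b \<Rightarrow> bool" where
  "conv_in_prob M F X c \<longleftrightarrow>
     (\<forall>e>0. ((\<lambda>T. measure M {\<omega> \<in> space M. dist (X T \<omega>) c > e}) \<longlongrightarrow> 0) F)"

definition conv_in_distr :: "'a measure \<Rightarrow> 'i filter \<Rightarrow> ('i \<Rightarrow> 'a \<Rightarrow> 'b::topological_space) \<Rightarrow> ('a \<Rightarrow> 'b) \<Rightarrow> bool" where
  "conv_in_distr M F X Y \<longleftrightarrow>
     (\<forall>g::'b \<Rightarrow> real. continuous_on UNIV g \<and> bounded (range g) \<longrightarrow>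
        ((\<lambda>T. integral\<^sup>L M (\<lambda>\<omega>. g (X T \<omega>))) \<longlongrightarrow> integral\<^sup>L M (\<lambda>\<omega>. g (Y \<omega>))) F)"

end

theory Submission
  imports Defs
begin

text \<open>
  Split u_hat T into its part Z T on the coordinates J1 and its part on J0. A coordinate j of
  the J0 part is the j-th coordinate of the error rescaled by (xi T j) powr (-1/q), which tends
  to 0 in probability, times the ratio (xi T j) powr (-1/q) / |alpha T j|, which tends to 0 in
  probability by [A6]; hence u_hat T - Z T tends to 0 in probability. The uniform bound on the
  m-th moments makes u_hat T tight, so the converging-together lemma carries the convergence in
  distribution of Z T to u_tilde over to u_hat T. Finally, as f = o(|u|^m), f differs from a
  bounded continuous function by at most eta |u|^m; the uniform moment bound, which the limit
  inherits by monotone convergence, turns this into convergence of the expectations.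
\<close>

lemma along_neq_bot:
  assumes "\<forall>x. \<exists>T\<in>TT. x < T"
  shows "along TT \<noteq> bot"
proof
  assume "along TT = bot"
  then have "eventually (\<lambda>T. T \<in> TT \<longrightarrow> False) at_top"
    unfolding along_def eventually_inf_principal[symmetric] by simp
  then obtain N :: real where "\<forall>T\<ge>N. T \<notin> TT"
    by (auto simp: eventually_at_top_linorder)
  moreover obtain T where "T \<in> TT" "N < T" using assms by blast
  ultimately show False by auto
qed

lemma eventually_in_along: "eventually (\<lambda>T. T \<in> TT) (along TT)"
  unfolding along_def by (simp add: eventually_inf_principal)

section \<open>Measurability\<close>

lemma borel_measurable_vec_nth [measurable (raw)]:
  fixes f :: "'a \<Rightarrow> 'b::euclidean_space ^ 'n"
  assumes "f \<in> borel_measurable M"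
  shows "(\<lambda>x. f x $ i) \<in> borel_measurable M"
proof -
  have "(\<lambda>x::'b^'n. x $ i) \<in> borel_measurable borel"
    by (intro borel_measurable_continuous_onI continuous_intros)
  from measurable_compose[OF assms this] show ?thesis by simp
qed

lemma borel_measurable_vec_lambda [measurable]:
  fixes f :: "'a \<Rightarrow> 'n::finite \<Rightarrow> 'b::euclidean_space"
  assumes "\<And>i. (\<lambda>x. f x i) \<in> borel_measurable M"
  shows "(\<lambda>x. \<chi> i. f x i) \<in> borel_measurable M"
proof (subst borel_measurable_euclidean_space, intro ballI)
  fix b :: "'b ^ 'n" assume "b \<in> Basis"
  then obtain i u where b: "b = axis i u" "u \<in> Basis" by (auto simp: Basis_vec_def)
  then show "(\<lambda>x. (\<chi> i. f x i) \<bullet> b) \<in> borel_measurable M"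
    using assms[of i] by (simp add: inner_axis)
qed

lemma continuous_on_det: "continuous_on UNIV (det :: real^'n^'n \<Rightarrow> real)"
  unfolding det_def[abs_def] by (intro continuous_intros)

lemma borel_measurable_det [measurable (raw)]:
  fixes A :: "'a \<Rightarrow> real^'n^'n"
  assumes "A \<in> borel_measurable M"
  shows "(\<lambda>x. det (A x)) \<in> borel_measurable M"
  using measurable_compose[OF assms borel_measurable_continuous_onI[OF continuous_on_det]] by simp

lemma matrix_inv_mult_vec_cramer:
  fixes A :: "real^'n^'n"
  assumes "det A \<noteq> 0"
  shows "matrix_inv A *v v = (\<chi> k. det (\<chi> i j. if j = k then v $ i else A $ i $ j) / det A)"
proof -
  have "A ** matrix_inv A = mat 1"
    using assms unfolding invertible_det_nz[symmetric] invertible_def matrix_inv_def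
    by (rule someI2_ex) blast
  then have "A *v (matrix_inv A *v v) = v"
    by (simp add: matrix_vector_mul_assoc)
  with cramer[OF assms] show ?thesis by blast
qed

lemma borel_measurable_block_inv_apply [measurable]:
  fixes A :: "'a \<Rightarrow> real^'p^'p" and w :: "'a \<Rightarrow> real^'p"
  assumes [measurable]: "A \<in> borel_measurable M" "w \<in> borel_measurable M"
  shows "(\<lambda>x. block_inv_apply J (A x) (w x)) \<in> borel_measurable M"
  unfolding block_inv_apply_def Let_def invertible_det_nz proj_def
  by (simp add: matrix_inv_mult_vec_cramer cong: if_cong) measurable

section \<open>Convergence in probability to zero\<close>

lemma conv_in_prob_iff_dist:
  "conv_in_prob M F X c \<longleftrightarrow> conv_in_prob M F (\<lambda>T \<omega>. dist (X T \<omega>) c) (0::real)"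
  by (simp add: conv_in_prob_def)

lemma conv_in_prob_dominated:
  fixes X :: "'i \<Rightarrow> 'a \<Rightarrow> 'b::metric_space" and Y :: "'i \<Rightarrow> 'a \<Rightarrow> real"
  assumes "finite_measure M" "conv_in_prob M F Y 0"
    and "eventually (\<lambda>T. Y T \<in> borel_measurable M \<and> (\<forall>\<omega>\<in>space M. dist (X T \<omega>) c \<le> Y T \<omega>)) F"
  shows "conv_in_prob M F X c"
  unfolding conv_in_prob_def
proof (intro allI impI)
  fix e :: real assume "e > 0"
  with assms(2) have "((\<lambda>T. measure M {\<omega> \<in> space M. \<bar>Y T \<omega>\<bar> > e}) \<longlongrightarrow> 0) F"
    by (simp add: conv_in_prob_def dist_real_def)
  moreover have "eventually (\<lambda>T. norm (measure M {\<omega> \<in> space M. dist (X T \<omega>) c > e})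
      \<le> measure M {\<omega> \<in> space M. \<bar>Y T \<omega>\<bar> > e}) F"
    using assms(3)
  proof eventually_elim
    case (elim T)
    then have [measurable]: "Y T \<in> borel_measurable M" by simp
    have "{\<omega> \<in> space M. dist (X T \<omega>) c > e} \<subseteq> {\<omega> \<in> space M. \<bar>Y T \<omega>\<bar> > e}"
      using elim by force
    moreover have "{\<omega> \<in> space M. \<bar>Y T \<omega>\<bar> > e} \<in> sets M" by measurable
    ultimately show ?case by (simp add: finite_measure.finite_measure_mono[OF assms(1)])
  qed
  ultimately show "((\<lambda>T. measure M {\<omega> \<in> space M. dist (X T \<omega>) c > e}) \<longlongrightarrow> 0) F"
    by (rule Lim_null_comparison[rotated])
qed

lemma abs_sum_gt_imp_summand_gt:
  fixes x :: "'j \<Rightarrow> real"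
  assumes "0 < e" "e < \<bar>\<Sum>j\<in>J. x j\<bar>"
  shows "\<exists>j\<in>J. e / card J < \<bar>x j\<bar>"
proof (rule ccontr)
  assume "\<not> ?thesis"
  then have "\<bar>\<Sum>j\<in>J. x j\<bar> \<le> card J * (e / card J)"
    by (intro order_trans[OF sum_abs sum_bounded_above]) auto
  also have "\<dots> \<le> e"
    using \<open>0 < e\<close> by (cases "card J = 0") auto
  finally show False using assms(2) by simp
qed

lemma conv_in_prob_sum_zero:
  fixes X :: "'j \<Rightarrow> 'i \<Rightarrow> 'a \<Rightarrow> real"
  assumes "finite_measure M" "finite J"
    and "\<And>j. j \<in> J \<Longrightarrow> conv_in_prob M F (X j) 0"
    and "\<And>j. j \<in> J \<Longrightarrow> eventually (\<lambda>T. X j T \<in> borel_measurable M) F"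
  shows "conv_in_prob M F (\<lambda>T \<omega>. \<Sum>j\<in>J. X j T \<omega>) 0"
  unfolding conv_in_prob_def dist_real_def diff_zero
proof (intro allI impI)
  fix e :: real assume "e > 0"
  define d where "d = e / card J"
  have "((\<lambda>T. \<Sum>j\<in>J. measure M {\<omega> \<in> space M. \<bar>X j T \<omega>\<bar> > d}) \<longlongrightarrow> 0) F"
  proof (rule tendsto_null_sum)
    fix j assume "j \<in> J"
    with assms(2) have "card J > 0" by (auto simp: card_gt_0_iff)
    with \<open>e > 0\<close> have "d > 0" by (simp add: d_def)
    with assms(3)[OF \<open>j \<in> J\<close>] show "((\<lambda>T. measure M {\<omega> \<in> space M. \<bar>X j T \<omega>\<bar> > d}) \<longlongrightarrow> 0) F"
      by (simp add: conv_in_prob_def dist_real_def)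
  qed
  moreover have "eventually (\<lambda>T. norm (measure M {\<omega> \<in> space M. \<bar>\<Sum>j\<in>J. X j T \<omega>\<bar> > e})
      \<le> (\<Sum>j\<in>J. measure M {\<omega> \<in> space M. \<bar>X j T \<omega>\<bar> > d})) F"
  proof -
    have "eventually (\<lambda>T. \<forall>j\<in>J. X j T \<in> borel_measurable M) F"
      using assms(2,4) by (simp add: eventually_ball_finite_distrib)
    then show ?thesis
    proof eventually_elim
      case (elim T)
      then have [measurable]: "X j T \<in> borel_measurable M" if "j \<in> J" for j
        using that by blast
      have "{\<omega> \<in> space M. \<bar>\<Sum>j\<in>J. X j T \<omega>\<bar> > e} \<subseteq> (\<Union>j\<in>J. {\<omega> \<in> space M. \<bar>X j T \<omega>\<bar> > d})"
        unfolding d_def using abs_sum_gt_imp_summand_gt[OF \<open>e > 0\<close>] by blast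
      then have "measure M {\<omega> \<in> space M. \<bar>\<Sum>j\<in>J. X j T \<omega>\<bar> > e}
          \<le> measure M (\<Union>j\<in>J. {\<omega> \<in> space M. \<bar>X j T \<omega>\<bar> > d})"
        using assms(2) by (intro finite_measure.finite_measure_mono[OF assms(1)]) auto
      also have "\<dots> \<le> (\<Sum>j\<in>J. measure M {\<omega> \<in> space M. \<bar>X j T \<omega>\<bar> > d})"
        using assms(2) by (intro finite_measure.finite_measure_subadditive_finite[OF assms(1)]) auto
      finally show ?case by simp
    qed
  qed
  ultimately show "((\<lambda>T. measure M {\<omega> \<in> space M. \<bar>\<Sum>j\<in>J. X j T \<omega>\<bar> > e}) \<longlongrightarrow> 0) F"
    by (rule Lim_null_comparison[rotated])
qed

lemma conv_in_prob_mult_zero: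
  fixes X Y :: "'i \<Rightarrow> 'a \<Rightarrow> real"
  assumes "finite_measure M" "conv_in_prob M F X 0" "conv_in_prob M F Y 0"
    and "eventually (\<lambda>T. X T \<in> borel_measurable M \<and> Y T \<in> borel_measurable M) F"
  shows "conv_in_prob M F (\<lambda>T \<omega>. X T \<omega> * Y T \<omega>) 0"
  unfolding conv_in_prob_def dist_real_def diff_zero
proof (intro allI impI)
  fix e :: real assume "e > 0"
  then have "((\<lambda>T. measure M {\<omega> \<in> space M. \<bar>X T \<omega>\<bar> > sqrt e}
      + measure M {\<omega> \<in> space M. \<bar>Y T \<omega>\<bar> > sqrt e}) \<longlongrightarrow> 0) F"
    using assms(2,3) by (intro tendsto_add_zero) (simp_all add: conv_in_prob_def dist_real_def)
  moreover have "eventually (\<lambda>T. norm (measure M {\<omega> \<in> space M. \<bar>X T \<omega> * Y T \<omega>\<bar> > e})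
      \<le> measure M {\<omega> \<in> space M. \<bar>X T \<omega>\<bar> > sqrt e} + measure M {\<omega> \<in> space M. \<bar>Y T \<omega>\<bar> > sqrt e}) F"
    using assms(4)
  proof eventually_elim
    case (elim T)
    then have [measurable]: "X T \<in> borel_measurable M" "Y T \<in> borel_measurable M" by simp_all
    have "sqrt e < \<bar>X T \<omega>\<bar> \<or> sqrt e < \<bar>Y T \<omega>\<bar>" if "e < \<bar>X T \<omega> * Y T \<omega>\<bar>" for \<omega>
    proof (rule ccontr)
      assume "\<not> ?thesis"
      then have "\<bar>X T \<omega>\<bar> * \<bar>Y T \<omega>\<bar> \<le> sqrt e * sqrt e"
        using \<open>e > 0\<close> by (intro mult_mono) auto
      with that \<open>e > 0\<close> show False by (simp add: abs_mult)
    qed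
    then have "measure M {\<omega> \<in> space M. \<bar>X T \<omega> * Y T \<omega>\<bar> > e}
        \<le> measure M ({\<omega> \<in> space M. \<bar>X T \<omega>\<bar> > sqrt e} \<union> {\<omega> \<in> space M. \<bar>Y T \<omega>\<bar> > sqrt e})"
      by (intro finite_measure.finite_measure_mono[OF assms(1)]) auto
    also have "\<dots> \<le> measure M {\<omega> \<in> space M. \<bar>X T \<omega>\<bar> > sqrt e} + measure M {\<omega> \<in> space M. \<bar>Y T \<omega>\<bar> > sqrt e}"
      by (intro measure_Un_le) measurable
    finally show ?case by simp
  qed
  ultimately show "((\<lambda>T. measure M {\<omega> \<in> space M. \<bar>X T \<omega> * Y T \<omega>\<bar> > e}) \<longlongrightarrow> 0) F"
    by (rule Lim_null_comparison[rotated])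
qed

lemma norm_rescaled_le:
  fixes d s a :: "'p::finite \<Rightarrow> real"
  assumes "\<And>j. j \<in> J \<Longrightarrow> s j \<noteq> 0"
  shows "norm (\<chi> j. if j \<in> J then d j / a j else 0)
    \<le> norm (\<chi> j. if j \<in> J then d j / s j else 0) * (\<Sum>j\<in>J. \<bar>s j / a j\<bar>)"
proof -
  let ?v = "\<chi> j. if j \<in> J then d j / s j else 0"
  have "norm (\<chi> j. if j \<in> J then d j / a j else 0) \<le> (\<Sum>j\<in>J. \<bar>d j / a j\<bar>)"
    using norm_le_l1_cart[of "\<chi> j. if j \<in> J then d j / a j else 0"]
    by (simp add: if_distrib[where f = abs] sum.If_cases)
  also have "\<dots> = (\<Sum>j\<in>J. \<bar>?v $ j\<bar> * \<bar>s j / a j\<bar>)"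
    using assms by (intro sum.cong) (simp_all add: abs_divide)
  also have "\<dots> \<le> (\<Sum>j\<in>J. norm ?v * \<bar>s j / a j\<bar>)"
    by (intro sum_mono mult_right_mono component_le_norm_cart) simp
  finally show ?thesis by (simp add: sum_distrib_left)
qed

lemma conv_in_prob_rescaled_zero:
  fixes D s :: "'i \<Rightarrow> 'a \<Rightarrow> 'p::finite \<Rightarrow> real" and a :: "'i \<Rightarrow> 'p \<Rightarrow> real"
  assumes "finite_measure M"
    and "conv_in_prob M F (\<lambda>T \<omega>. \<chi> j. if j \<in> J then D T \<omega> j / s T \<omega> j else 0) 0"
    and "\<forall>j\<in>J. conv_in_prob M F (\<lambda>T \<omega>. s T \<omega> j / \<bar>a T j\<bar>) 0"
    and "eventually (\<lambda>T. \<forall>j. (\<lambda>\<omega>. D T \<omega> j) \<in> borel_measurable M \<and> (\<lambda>\<omega>. s T \<omega> j) \<in> borel_measurable M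
           \<and> (\<forall>\<omega>\<in>space M. 0 < s T \<omega> j)) F"
  shows "conv_in_prob M F (\<lambda>T \<omega>. \<chi> j. if j \<in> J then D T \<omega> j / a T j else 0) 0"
proof (rule conv_in_prob_dominated[OF assms(1)])
  define V where "V T \<omega> = (\<chi> j. if j \<in> J then D T \<omega> j / s T \<omega> j else 0)" for T \<omega>
  define W where "W T \<omega> = (\<Sum>j\<in>J. \<bar>s T \<omega> j / \<bar>a T j\<bar>\<bar>)" for T \<omega>
  have measurable_VW: "eventually (\<lambda>T. (\<lambda>\<omega>. norm (V T \<omega>)) \<in> borel_measurable M
      \<and> (\<forall>j\<in>J. (\<lambda>\<omega>. \<bar>s T \<omega> j / \<bar>a T j\<bar>\<bar>) \<in> borel_measurable M) \<and> W T \<in> borel_measurable M) F"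
    using assms(4)
  proof eventually_elim
    case (elim T)
    then have [measurable]: "(\<lambda>\<omega>. D T \<omega> j) \<in> borel_measurable M" "(\<lambda>\<omega>. s T \<omega> j) \<in> borel_measurable M"
      for j by auto
    show ?case unfolding V_def W_def by (intro conjI ballI; measurable)
  qed
  have "conv_in_prob M F (\<lambda>T \<omega>. dist (V T \<omega>) 0) 0"
    using assms(2) unfolding V_def conv_in_prob_iff_dist[symmetric] .
  moreover have "conv_in_prob M F W 0"
    unfolding W_def using assms(3) measurable_VW
    by (intro conv_in_prob_sum_zero[OF assms(1)]) (auto simp: conv_in_prob_def dist_real_def elim: eventually_mono)
  ultimately show "conv_in_prob M F (\<lambda>T \<omega>. norm (V T \<omega>) * W T \<omega>) 0"
    using measurable_VW by (intro conv_in_prob_mult_zero[OF assms(1)]) (auto elim: eventually_mono)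
  show "eventually (\<lambda>T. (\<lambda>\<omega>. norm (V T \<omega>) * W T \<omega>) \<in> borel_measurable M \<and> (\<forall>\<omega>\<in>space M.
      dist (\<chi> j. if j \<in> J then D T \<omega> j / a T j else 0) 0 \<le> norm (V T \<omega>) * W T \<omega>)) F"
    using measurable_VW assms(4)
  proof eventually_elim
    case (elim T)
    have "dist (\<chi> j. if j \<in> J then D T \<omega> j / a T j else 0) 0 \<le> norm (V T \<omega>) * W T \<omega>"
      if "\<omega> \<in> space M" for \<omega>
      using norm_rescaled_le[of J "\<lambda>j. s T \<omega> j" "\<lambda>j. D T \<omega> j" "a T"] elim that
      by (simp add: V_def W_def abs_divide less_imp_neq[symmetric])
    with elim show ?case by auto
  qed
qed

section \<open>Tightness and the converging-together lemma\<close>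

definition bounded_in_prob :: "'a measure \<Rightarrow> 'i filter \<Rightarrow> ('i \<Rightarrow> 'a \<Rightarrow> 'b::real_normed_vector) \<Rightarrow> bool" where
  "bounded_in_prob M F Y \<longleftrightarrow>
     (\<forall>e>0. \<exists>R. eventually (\<lambda>T. measure M {\<omega> \<in> space M. norm (Y T \<omega>) > R} \<le> e) F)"

lemma bounded_in_prob_if_moments_bounded:
  fixes Y :: "'i \<Rightarrow> 'a \<Rightarrow> 'b::real_normed_vector"
  assumes "finite_measure M" "m > 0"
    and "eventually (\<lambda>T. Y T \<in> borel_measurable M \<and> integrable M (\<lambda>\<omega>. norm (Y T \<omega>) powr m)
           \<and> integral\<^sup>L M (\<lambda>\<omega>. norm (Y T \<omega>) powr m) \<le> C) F"
  shows "bounded_in_prob M F Y"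
  unfolding bounded_in_prob_def
proof (intro allI impI)
  fix e :: real assume "e > 0"
  have "((\<lambda>R. C * R powr (-m)) \<longlongrightarrow> C * 0) at_top"
    using \<open>m > 0\<close> by (intro tendsto_mult tendsto_const tendsto_neg_powr filterlim_ident) auto
  then have "eventually (\<lambda>R. 0 < R \<and> C * R powr (-m) < e) at_top"
    using \<open>e > 0\<close> by (intro eventually_conj eventually_gt_at_top) (auto dest: order_tendstoD)
  then obtain R where "0 < R" "C / R powr m < e"
    by (auto simp: eventually_at_top_linorder powr_minus_divide)
  show "\<exists>R. eventually (\<lambda>T. measure M {\<omega> \<in> space M. norm (Y T \<omega>) > R} \<le> e) F"
  proof (intro exI)
    show "eventually (\<lambda>T. measure M {\<omega> \<in> space M. norm (Y T \<omega>) > R} \<le> e) F"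
      using assms(3)
    proof eventually_elim
      case (elim T)
      then have [measurable]: "Y T \<in> borel_measurable M" by simp
      have "measure M {\<omega> \<in> space M. norm (Y T \<omega>) > R}
          \<le> measure M {\<omega> \<in> space M. norm (Y T \<omega>) powr m \<ge> R powr m}"
        using \<open>0 < R\<close> \<open>m > 0\<close>
        by (intro finite_measure.finite_measure_mono[OF assms(1)]) (auto intro: powr_mono2)
      also have "\<dots> \<le> integral\<^sup>L M (\<lambda>\<omega>. norm (Y T \<omega>) powr m) / R powr m"
        using elim \<open>0 < R\<close> by (intro integral_Markov_inequality_measure[where A = "space M"]) auto
      also have "\<dots> \<le> C / R powr m"
        using elim by (intro divide_right_mono) auto
      finally show ?case using \<open>C / R powr m < e\<close> by linarith
    qed
  qed
qed

lemma uniformly_continuous_near_cball: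
  fixes g :: "'b::euclidean_space \<Rightarrow> real"
  assumes "continuous_on UNIV g" "e > 0"
  obtains \<delta> where "\<delta> > 0" "\<And>x y. norm x \<le> R \<Longrightarrow> dist x y \<le> \<delta> \<Longrightarrow> \<bar>g x - g y\<bar> \<le> e"
proof -
  have "uniformly_continuous_on (cball 0 (R + 1)) g"
    using assms(1) by (intro compact_uniformly_continuous) (auto intro: continuous_on_subset)
  then obtain d where "d > 0" and d: "\<forall>x\<in>cball 0 (R + 1). \<forall>y\<in>cball 0 (R + 1). dist y x < d \<longrightarrow> dist (g y) (g x) < e"
    using assms(2) unfolding uniformly_continuous_on_def by metis
  show ?thesis
  proof
    show "min d 1 / 2 > 0" using \<open>d > 0\<close> by simp
    fix x y :: 'b assume x: "norm x \<le> R" and xy: "dist x y \<le> min d 1 / 2"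
    have "norm y \<le> norm x + dist x y"
      using norm_triangle_ineq[of x "y - x"] by (simp add: dist_norm norm_minus_commute)
    with x xy \<open>d > 0\<close> have "dist (g y) (g x) < e"
      by (intro d[rule_format]) (auto simp: dist_commute)
    then show "\<bar>g x - g y\<bar> \<le> e" by (simp add: dist_real_def)
  qed
qed

lemma (in prob_space) abs_expectation_diff_le:
  fixes X Y :: "'a \<Rightarrow> 'b::euclidean_space" and g :: "'b \<Rightarrow> real"
  assumes [measurable]: "X \<in> borel_measurable M" "Y \<in> borel_measurable M" "g \<in> borel_measurable borel"
    and bound: "\<And>x. \<bar>g x\<bar> \<le> B" and "0 \<le> e"
    and close: "\<And>x y. norm x \<le> R \<Longrightarrow> dist x y \<le> \<delta> \<Longrightarrow> \<bar>g x - g y\<bar> \<le> e"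
  shows "\<bar>expectation (\<lambda>\<omega>. g (X \<omega>)) - expectation (\<lambda>\<omega>. g (Y \<omega>))\<bar>
    \<le> e + 2 * B * prob {\<omega> \<in> space M. norm (X \<omega>) > R}
        + 2 * B * prob {\<omega> \<in> space M. dist (X \<omega>) (Y \<omega>) > \<delta>}"
proof -
  define A1 where "A1 = {\<omega> \<in> space M. norm (X \<omega>) > R}"
  define A2 where "A2 = {\<omega> \<in> space M. dist (X \<omega>) (Y \<omega>) > \<delta>}"
  have [measurable]: "A1 \<in> sets M" "A2 \<in> sets M" unfolding A1_def A2_def by measurable
  have int: "integrable M (\<lambda>\<omega>. g (X \<omega>))" "integrable M (\<lambda>\<omega>. g (Y \<omega>))"
    using bound by (auto intro!: integrable_const_bound[where B = B])
  have "0 \<le> B" using order_trans[OF abs_ge_zero bound] .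
  have pointwise: "\<bar>g (X \<omega>) - g (Y \<omega>)\<bar> \<le> e + 2 * B * indicator A1 \<omega> + 2 * B * indicator A2 \<omega>"
    if "\<omega> \<in> space M" for \<omega>
  proof (cases "\<omega> \<in> A1 \<union> A2")
    case True
    have "\<bar>g (X \<omega>) - g (Y \<omega>)\<bar> \<le> 2 * B" using bound[of "X \<omega>"] bound[of "Y \<omega>"] by linarith
    with True \<open>0 \<le> e\<close> \<open>0 \<le> B\<close> show ?thesis by (auto simp: indicator_def)
  next
    case False
    with that close show ?thesis by (auto simp: A1_def A2_def not_less)
  qed
  have ind: "integrable M (indicator A1 :: 'a \<Rightarrow> real)" "integrable M (indicator A2 :: 'a \<Rightarrow> real)"
    by (auto intro!: integrable_real_indicator simp: less_top[symmetric])
  have "\<bar>expectation (\<lambda>\<omega>. g (X \<omega>)) - expectation (\<lambda>\<omega>. g (Y \<omega>))\<bar>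
      = \<bar>expectation (\<lambda>\<omega>. g (X \<omega>) - g (Y \<omega>))\<bar>"
    using int by simp
  also have "\<dots> \<le> expectation (\<lambda>\<omega>. \<bar>g (X \<omega>) - g (Y \<omega>)\<bar>)"
    using integral_norm_bound[of M "\<lambda>\<omega>. g (X \<omega>) - g (Y \<omega>)"] by simp
  also have "\<dots> \<le> expectation (\<lambda>\<omega>. e + 2 * B * indicator A1 \<omega> + 2 * B * indicator A2 \<omega>)"
    using int ind pointwise by (intro integral_mono) auto
  also have "\<dots> = e + 2 * B * prob A1 + 2 * B * prob A2"
    using ind by (simp add: Int_absorb2 sets.sets_into_space prob_space)
  finally show ?thesis unfolding A1_def A2_def .
qed

lemma conv_in_distr_converging_together:
  fixes Y Z :: "'i \<Rightarrow> 'a \<Rightarrow> 'b::euclidean_space"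
  assumes "prob_space M" "conv_in_distr M F Z U" "conv_in_prob M F (\<lambda>T \<omega>. Y T \<omega> - Z T \<omega>) 0"
    and "bounded_in_prob M F Y"
    and "eventually (\<lambda>T. Y T \<in> borel_measurable M \<and> Z T \<in> borel_measurable M) F"
  shows "conv_in_distr M F Y U"
  unfolding conv_in_distr_def
proof (intro allI impI)
  interpret prob_space M by fact
  fix g :: "'b \<Rightarrow> real" assume g: "continuous_on UNIV g \<and> bounded (range g)"
  then obtain B where B: "\<And>x. \<bar>g x\<bar> \<le> B" by (auto simp: bounded_iff)
  have "0 \<le> B" using order_trans[OF abs_ge_zero B] .
  have [measurable]: "g \<in> borel_measurable borel" using g by (intro borel_measurable_continuous_onI) simp
  have "((\<lambda>T. expectation (\<lambda>\<omega>. g (Y T \<omega>)) - expectation (\<lambda>\<omega>. g (Z T \<omega>))) \<longlongrightarrow> 0) F"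
  proof (rule tendstoI)
    fix \<epsilon> :: real assume "\<epsilon> > 0"
    define e where "e = \<epsilon> / (2 + 8 * B)"
    have "e > 0" "e * (1 + 4 * B) = \<epsilon> / 2"
      using \<open>\<epsilon> > 0\<close> \<open>0 \<le> B\<close> by (simp_all add: e_def field_simps)
    \<comment> \<open>g is uniformly continuous only near compact sets; tightness of Y localises to a ball.\<close>
    obtain R where R: "eventually (\<lambda>T. prob {\<omega> \<in> space M. norm (Y T \<omega>) > R} \<le> e) F"
      using assms(4) \<open>e > 0\<close> unfolding bounded_in_prob_def by blast
    obtain \<delta> where "\<delta> > 0" and \<delta>: "\<And>x y. norm x \<le> R \<Longrightarrow> dist x y \<le> \<delta> \<Longrightarrow> \<bar>g x - g y\<bar> \<le> e"
      using uniformly_continuous_near_cball g \<open>e > 0\<close> by metis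
    have "eventually (\<lambda>T. prob {\<omega> \<in> space M. dist (Y T \<omega>) (Z T \<omega>) > \<delta>} < e) F"
      using assms(3) \<open>\<delta> > 0\<close> \<open>e > 0\<close> unfolding conv_in_prob_def
      by (auto simp: dist_norm dest: order_tendstoD)
    with R assms(5)
    show "eventually (\<lambda>T. dist (expectation (\<lambda>\<omega>. g (Y T \<omega>)) - expectation (\<lambda>\<omega>. g (Z T \<omega>))) 0 < \<epsilon>) F"
    proof eventually_elim
      case (elim T)
      then have "\<bar>expectation (\<lambda>\<omega>. g (Y T \<omega>)) - expectation (\<lambda>\<omega>. g (Z T \<omega>))\<bar>
          \<le> e + 2 * B * prob {\<omega> \<in> space M. norm (Y T \<omega>) > R}
              + 2 * B * prob {\<omega> \<in> space M. dist (Y T \<omega>) (Z T \<omega>) > \<delta>}"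
        using B \<open>e > 0\<close> \<delta> by (intro abs_expectation_diff_le) auto
      also have "\<dots> \<le> e + 2 * B * e + 2 * B * e"
        using elim \<open>0 \<le> B\<close> by (intro add_mono mult_left_mono) auto
      also have "\<dots> < \<epsilon>"
        using \<open>e * (1 + 4 * B) = \<epsilon> / 2\<close> \<open>\<epsilon> > 0\<close> by (simp add: algebra_simps)
      finally show ?case by (simp add: dist_real_def)
    qed
  qed
  moreover have "((\<lambda>T. expectation (\<lambda>\<omega>. g (Z T \<omega>))) \<longlongrightarrow> expectation (\<lambda>\<omega>. g (U \<omega>))) F"
    using assms(2) g unfolding conv_in_distr_def by blast
  ultimately show "((\<lambda>T. expectation (\<lambda>\<omega>. g (Y T \<omega>))) \<longlongrightarrow> expectation (\<lambda>\<omega>. g (U \<omega>))) F"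
    by (rule Lim_transform[rotated])
qed

section \<open>Convergence of expectations under a moment bound\<close>

lemma (in prob_space) integral_le_if_truncated_integrals_le:
  fixes h :: "'a \<Rightarrow> real"
  assumes [measurable]: "h \<in> borel_measurable M"
    and "\<And>\<omega>. 0 \<le> h \<omega>" "\<And>K :: nat. expectation (\<lambda>\<omega>. min (h \<omega>) K) \<le> c"
  shows "integrable M h \<and> expectation h \<le> c"
proof -
  define hK where "hK K \<omega> = min (h \<omega>) (real K)" for K :: nat and \<omega>
  have [measurable]: "hK K \<in> borel_measurable M" for K
    unfolding hK_def by measurable
  have int: "integrable M (hK K)" for K
    by (intro integrable_const_bound[where B = "real K"]) (auto simp: hK_def assms(2))
  have "incseq (\<lambda>K. expectation (hK K))"
    by (intro monoI integral_mono int) (auto simp: hK_def)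
  then obtain L where L: "(\<lambda>K. expectation (hK K)) \<longlonglongrightarrow> L"
    using incseq_convergent assms(3) unfolding hK_def by blast
  have lim: "AE \<omega> in M. (\<lambda>K. hK K \<omega>) \<longlonglongrightarrow> h \<omega>"
  proof (intro AE_I2 tendsto_eventually)
    fix \<omega>
    obtain N :: nat where "h \<omega> \<le> real N" using real_arch_simple by blast
    then show "eventually (\<lambda>K. hK K \<omega> = h \<omega>) sequentially"
      unfolding eventually_sequentially hK_def by (intro exI[of _ N]) auto
  qed
  have mono: "AE \<omega> in M. mono (\<lambda>K. hK K \<omega>)"
    by (intro AE_I2 monoI) (auto simp: hK_def)
  have nonneg: "AE \<omega> in M. 0 \<le> hK K \<omega>" for K
    using assms(2) by (intro AE_I2) (simp add: hK_def)
  note monotone_convergence = integral_monotone_convergence_nonneg[OF int mono nonneg lim L]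
  have "integrable M h" "expectation h = L"
    by (rule monotone_convergence; measurable)+
  moreover have "L \<le> c"
    using L assms(3) unfolding hK_def by (intro LIMSEQ_le_const2) auto
  ultimately show ?thesis by simp
qed

lemma conv_in_distr_integral_le:
  fixes Y :: "'i \<Rightarrow> 'a \<Rightarrow> 'b::topological_space" and h :: "'b \<Rightarrow> real"
  assumes "prob_space M" "F \<noteq> bot" "conv_in_distr M F Y U" "U \<in> borel_measurable M"
    and "continuous_on UNIV h" "\<And>x. 0 \<le> h x"
    and "eventually (\<lambda>T. Y T \<in> borel_measurable M \<and> integrable M (\<lambda>\<omega>. h (Y T \<omega>))
           \<and> integral\<^sup>L M (\<lambda>\<omega>. h (Y T \<omega>)) \<le> c) F"
  shows "integrable M (\<lambda>\<omega>. h (U \<omega>)) \<and> integral\<^sup>L M (\<lambda>\<omega>. h (U \<omega>)) \<le> c"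
proof -
  interpret prob_space M by fact
  have [measurable]: "h \<in> borel_measurable borel"
    using assms(5) by (rule borel_measurable_continuous_onI)
  show ?thesis
  proof (rule integral_le_if_truncated_integrals_le)
    fix K :: nat
    have "continuous_on UNIV (\<lambda>x. min (h x) K)" "bounded (range (\<lambda>x. min (h x) K))"
      using assms(5,6) unfolding bounded_iff by (auto intro!: continuous_intros exI[of _ "real K"])
    then have "((\<lambda>T. expectation (\<lambda>\<omega>. min (h (Y T \<omega>)) K)) \<longlongrightarrow> expectation (\<lambda>\<omega>. min (h (U \<omega>)) K)) F"
      using assms(3) unfolding conv_in_distr_def by blast
    moreover have "eventually (\<lambda>T. expectation (\<lambda>\<omega>. min (h (Y T \<omega>)) K) \<le> c) F"
      using assms(7)
    proof eventually_elim
      case (elim T)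
      then have [measurable]: "Y T \<in> borel_measurable M" by simp
      have "integrable M (\<lambda>\<omega>. min (h (Y T \<omega>)) K)"
        by (intro integrable_const_bound[where B = "real K"]) (auto simp: assms(6))
      then have "expectation (\<lambda>\<omega>. min (h (Y T \<omega>)) K) \<le> expectation (\<lambda>\<omega>. h (Y T \<omega>))"
        using elim by (intro integral_mono) auto
      with elim show ?case by simp
    qed
    ultimately show "expectation (\<lambda>\<omega>. min (h (U \<omega>)) K) \<le> c"
      using assms(2) by (rule tendsto_upperbound)
  qed (use assms(4,6) in simp_all)
qed

lemma abs_le_powr_if_growth:
  fixes f :: "'b::real_normed_vector \<Rightarrow> real"
  assumes "((\<lambda>u. \<bar>f u\<bar> / norm u powr m) \<longlongrightarrow> 0) at_infinity" "\<eta> > 0"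
  obtains R where "\<And>u. R \<le> norm u \<Longrightarrow> \<bar>f u\<bar> \<le> \<eta> * norm u powr m"
proof -
  have "eventually (\<lambda>u. u \<noteq> 0) at_infinity"
    unfolding eventually_at_infinity by (intro exI[of _ 1]) auto
  then have "eventually (\<lambda>u. \<bar>f u\<bar> / norm u powr m < \<eta> \<and> u \<noteq> 0) at_infinity"
    using assms by (intro eventually_conj) (auto dest: order_tendstoD)
  then obtain R where R: "\<And>u. R \<le> norm u \<Longrightarrow> \<bar>f u\<bar> / norm u powr m < \<eta> \<and> u \<noteq> 0"
    unfolding eventually_at_infinity by blast
  show ?thesis
  proof
    fix u :: 'b assume "R \<le> norm u"
    with R have "\<bar>f u\<bar> / norm u powr m < \<eta>" "norm u powr m > 0" by auto
    then show "\<bar>f u\<bar> \<le> \<eta> * norm u powr m" by (simp add: pos_divide_less_eq mult.commute)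
  qed
qed

lemma bounded_continuous_approximation:
  fixes f :: "'b::euclidean_space \<Rightarrow> real"
  assumes "continuous_on UNIV f" "((\<lambda>u. \<bar>f u\<bar> / norm u powr m) \<longlongrightarrow> 0) at_infinity" "\<eta> > 0"
  obtains g where "continuous_on UNIV g" "bounded (range g)" "\<And>u. \<bar>f u - g u\<bar> \<le> \<eta> * norm u powr m"
proof -
  obtain R where f_small: "\<And>u. R \<le> norm u \<Longrightarrow> \<bar>f u\<bar> \<le> \<eta> * norm u powr m"
    using abs_le_powr_if_growth[OF assms(2,3)] by blast
  define \<phi> where "\<phi> u = max 0 (min 1 (R + 1 - norm u))" for u :: 'b
  have \<phi>: "0 \<le> \<phi> u" "\<phi> u \<le> 1" "norm u \<le> R \<Longrightarrow> \<phi> u = 1" "norm u \<ge> R + 1 \<Longrightarrow> \<phi> u = 0" for u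
    by (auto simp: \<phi>_def)
  show ?thesis
  proof
    show "continuous_on UNIV (\<lambda>u. f u * \<phi> u)"
      unfolding \<phi>_def using assms(1) by (intro continuous_intros) auto
    have "compact (f ` cball 0 (R + 1))"
      using assms(1) by (intro compact_continuous_image) (auto intro: continuous_on_subset)
    then obtain B where B: "\<And>u. norm u \<le> R + 1 \<Longrightarrow> \<bar>f u\<bar> \<le> B"
      by (fastforce dest: compact_imp_bounded simp: bounded_iff)
    have "\<bar>f u * \<phi> u\<bar> \<le> max B 0" for u
    proof (cases "norm u \<le> R + 1")
      case True
      have "\<bar>f u * \<phi> u\<bar> \<le> \<bar>f u\<bar>" using \<phi>[of u] by (simp add: abs_mult mult_left_le)
      with B[OF True] show ?thesis by linarith
    qed (use \<phi> in auto)
    then show "bounded (range (\<lambda>u. f u * \<phi> u))"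
      unfolding bounded_iff by auto
    fix u :: 'b
    show "\<bar>f u - f u * \<phi> u\<bar> \<le> \<eta> * norm u powr m"
    proof (cases "norm u \<le> R")
      case False
      have "\<bar>f u - f u * \<phi> u\<bar> = \<bar>f u\<bar> * \<bar>1 - \<phi> u\<bar>"
        by (simp add: abs_mult[symmetric] algebra_simps)
      also have "\<dots> = \<bar>f u\<bar> * (1 - \<phi> u)"
        using \<phi>(2)[of u] by simp
      also have "\<dots> \<le> \<bar>f u\<bar>" using \<phi> by (simp add: mult_left_le)
      also have "\<dots> \<le> \<eta> * norm u powr m"
        using False by (intro f_small) simp
      finally show ?thesis .
    qed (use \<phi> \<open>\<eta> > 0\<close> in simp)
  qed
qed

lemma (in prob_space) abs_expectation_diff_le_moment:
  fixes V :: "'a \<Rightarrow> 'b::euclidean_space" and f g :: "'b \<Rightarrow> real"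
  assumes [measurable]: "V \<in> borel_measurable M" "f \<in> borel_measurable borel" "g \<in> borel_measurable borel"
    and "integrable M (\<lambda>\<omega>. norm (V \<omega>) powr m)" "expectation (\<lambda>\<omega>. norm (V \<omega>) powr m) \<le> C"
    and "\<And>u. \<bar>g u\<bar> \<le> B" "\<And>u. \<bar>f u - g u\<bar> \<le> \<eta> * norm u powr m" "0 \<le> \<eta>"
  shows "integrable M (\<lambda>\<omega>. f (V \<omega>))"
    and "\<bar>expectation (\<lambda>\<omega>. f (V \<omega>)) - expectation (\<lambda>\<omega>. g (V \<omega>))\<bar> \<le> \<eta> * C"
proof -
  have int_g: "integrable M (\<lambda>\<omega>. g (V \<omega>))"
    using assms(6) by (intro integrable_const_bound[where B = B]) auto
  have int_bound: "integrable M (\<lambda>\<omega>. \<eta> * norm (V \<omega>) powr m)"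
    using assms(4) by simp
  have int_diff: "integrable M (\<lambda>\<omega>. f (V \<omega>) - g (V \<omega>))"
    using assms(7) by (intro Bochner_Integration.integrable_bound[OF int_bound] AE_I2)
      (auto intro: order_trans[OF _ abs_ge_self])
  show "integrable M (\<lambda>\<omega>. f (V \<omega>))"
    using Bochner_Integration.integrable_add[OF int_diff int_g] by simp
  then have "\<bar>expectation (\<lambda>\<omega>. f (V \<omega>)) - expectation (\<lambda>\<omega>. g (V \<omega>))\<bar>
      = \<bar>expectation (\<lambda>\<omega>. f (V \<omega>) - g (V \<omega>))\<bar>"
    using int_g by simp
  also have "\<dots> \<le> expectation (\<lambda>\<omega>. \<bar>f (V \<omega>) - g (V \<omega>)\<bar>)"
    using integral_norm_bound[of M "\<lambda>\<omega>. f (V \<omega>) - g (V \<omega>)"] by simp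
  also have "\<dots> \<le> expectation (\<lambda>\<omega>. \<eta> * norm (V \<omega>) powr m)"
    using int_diff int_bound assms(7) by (intro integral_mono integrable_abs) auto
  also have "\<dots> \<le> \<eta> * C"
    using assms(5,8) by (simp add: mult_left_mono)
  finally show "\<bar>expectation (\<lambda>\<omega>. f (V \<omega>)) - expectation (\<lambda>\<omega>. g (V \<omega>))\<bar> \<le> \<eta> * C" .
qed

lemma conv_in_distr_integral_tendsto_if_moments_bounded:
  fixes Y :: "'i \<Rightarrow> 'a \<Rightarrow> 'b::euclidean_space" and f :: "'b \<Rightarrow> real"
  assumes "prob_space M" "F \<noteq> bot" "conv_in_distr M F Y U" "U \<in> borel_measurable M" "m > 0"
    and moments: "eventually (\<lambda>T. Y T \<in> borel_measurable M \<and> integrable M (\<lambda>\<omega>. norm (Y T \<omega>) powr m)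
           \<and> integral\<^sup>L M (\<lambda>\<omega>. norm (Y T \<omega>) powr m) \<le> C) F"
    and "continuous_on UNIV f" "((\<lambda>u. \<bar>f u\<bar> / norm u powr m) \<longlongrightarrow> 0) at_infinity"
  shows "((\<lambda>T. integral\<^sup>L M (\<lambda>\<omega>. f (Y T \<omega>))) \<longlongrightarrow> integral\<^sup>L M (\<lambda>\<omega>. f (U \<omega>))) F"
proof (rule tendstoI)
  interpret prob_space M by fact
  have f_meas: "f \<in> borel_measurable borel"
    using assms(7) by (rule borel_measurable_continuous_onI)
  have cont_moment: "continuous_on UNIV (\<lambda>u::'b. norm u powr m)"
    using \<open>m > 0\<close> by (intro continuous_on_powr' continuous_intros) auto
  then have U_moment: "integrable M (\<lambda>\<omega>. norm (U \<omega>) powr m) \<and> expectation (\<lambda>\<omega>. norm (U \<omega>) powr m) \<le> C"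
    using conv_in_distr_integral_le[OF assms(1-4) cont_moment _ moments] by simp
  fix \<epsilon> :: real assume "\<epsilon> > 0"
  define \<eta> where "\<eta> = \<epsilon> / (3 * (\<bar>C\<bar> + 1))"
  have "0 < \<eta>" "\<eta> * C < \<epsilon> / 3"
    using \<open>\<epsilon> > 0\<close> by (auto simp: \<eta>_def field_simps) (cases "C \<ge> 0"; simp add: algebra_simps)
  obtain g where g: "continuous_on UNIV g" "bounded (range g)" "\<And>u. \<bar>f u - g u\<bar> \<le> \<eta> * norm u powr m"
    using bounded_continuous_approximation[OF assms(7,8) \<open>0 < \<eta>\<close>] by blast
  then obtain B where B: "\<And>u. \<bar>g u\<bar> \<le> B" by (auto simp: bounded_iff)
  have g_meas: "g \<in> borel_measurable borel"
    using g(1) by (rule borel_measurable_continuous_onI)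
  note approx = abs_expectation_diff_le_moment(2)[OF _ f_meas g_meas _ _ B g(3) less_imp_le[OF \<open>0 < \<eta>\<close>]]
  have "((\<lambda>T. expectation (\<lambda>\<omega>. g (Y T \<omega>))) \<longlongrightarrow> expectation (\<lambda>\<omega>. g (U \<omega>))) F"
    using assms(3) g unfolding conv_in_distr_def by blast
  then have "eventually (\<lambda>T. dist (expectation (\<lambda>\<omega>. g (Y T \<omega>))) (expectation (\<lambda>\<omega>. g (U \<omega>))) < \<epsilon> / 3) F"
    using \<open>\<epsilon> > 0\<close> by (intro tendstoD) auto
  with moments show "eventually (\<lambda>T. dist (expectation (\<lambda>\<omega>. f (Y T \<omega>))) (expectation (\<lambda>\<omega>. f (U \<omega>))) < \<epsilon>) F"
  proof eventually_elim
    case (elim T)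
    have "\<bar>expectation (\<lambda>\<omega>. f (Y T \<omega>)) - expectation (\<lambda>\<omega>. g (Y T \<omega>))\<bar> \<le> \<eta> * C"
      using elim by (intro approx) auto
    moreover have "\<bar>expectation (\<lambda>\<omega>. f (U \<omega>)) - expectation (\<lambda>\<omega>. g (U \<omega>))\<bar> \<le> \<eta> * C"
      using U_moment assms(4) by (intro approx) auto
    ultimately show ?case
      using elim \<open>\<eta> * C < \<epsilon> / 3\<close> unfolding dist_real_def abs_le_iff abs_less_iff by linarith
  qed
qed

lemma integral_tendsto_if_close_to_conv_in_distr:
  fixes Y Z :: "'i \<Rightarrow> 'a \<Rightarrow> 'b::euclidean_space" and f :: "'b \<Rightarrow> real"
  assumes "prob_space M" "F \<noteq> bot" "m > 0"
    and "conv_in_distr M F Z U" "U \<in> borel_measurable M"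
    and "conv_in_prob M F (\<lambda>T \<omega>. Y T \<omega> - Z T \<omega>) 0"
    and "eventually (\<lambda>T. Y T \<in> borel_measurable M \<and> Z T \<in> borel_measurable M
           \<and> integrable M (\<lambda>\<omega>. norm (Y T \<omega>) powr m) \<and> integral\<^sup>L M (\<lambda>\<omega>. norm (Y T \<omega>) powr m) \<le> C) F"
    and "continuous_on UNIV f" "((\<lambda>u. \<bar>f u\<bar> / norm u powr m) \<longlongrightarrow> 0) at_infinity"
  shows "((\<lambda>T. integral\<^sup>L M (\<lambda>\<omega>. f (Y T \<omega>))) \<longlongrightarrow> integral\<^sup>L M (\<lambda>\<omega>. f (U \<omega>))) F"
proof -
  have "finite_measure M" using assms(1) by (simp add: prob_space_def)
  have moments: "eventually (\<lambda>T. Y T \<in> borel_measurable M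
      \<and> integrable M (\<lambda>\<omega>. norm (Y T \<omega>) powr m) \<and> integral\<^sup>L M (\<lambda>\<omega>. norm (Y T \<omega>) powr m) \<le> C) F"
    using assms(7) by eventually_elim blast
  have measurable_YZ: "eventually (\<lambda>T. Y T \<in> borel_measurable M \<and> Z T \<in> borel_measurable M) F"
    using assms(7) by eventually_elim blast
  have "conv_in_distr M F Y U"
    by (rule conv_in_distr_converging_together[OF assms(1,4,6)
          bounded_in_prob_if_moments_bounded[OF \<open>finite_measure M\<close> assms(3) moments] measurable_YZ])
  from conv_in_distr_integral_tendsto_if_moments_bounded[OF assms(1,2) this assms(5,3) moments assms(8,9)]
  show ?thesis .
qed

lemma integral_bound_if_SUP_nn_integral_finite:
  fixes g :: "'i \<Rightarrow> 'a \<Rightarrow> real"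
  assumes "(SUP T\<in>TT. \<integral>\<^sup>+ \<omega>. ennreal (g T \<omega>) \<partial>M) < \<infinity>" "\<And>T \<omega>. 0 \<le> g T \<omega>"
  obtains C where "\<And>T. T \<in> TT \<Longrightarrow> g T \<in> borel_measurable M \<Longrightarrow> integrable M (g T) \<and> integral\<^sup>L M (g T) \<le> C"
proof
  fix T assume "T \<in> TT" and [measurable]: "g T \<in> borel_measurable M"
  let ?S = "SUP T\<in>TT. \<integral>\<^sup>+ \<omega>. ennreal (g T \<omega>) \<partial>M"
  have "(\<integral>\<^sup>+ \<omega>. ennreal (g T \<omega>) \<partial>M) \<le> ?S"
    using \<open>T \<in> TT\<close> by (rule SUP_upper)
  with assms show "integrable M (g T) \<and> integral\<^sup>L M (g T) \<le> enn2real ?S"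
    by (auto intro!: integrableI_bounded simp: integral_eq_nn_integral enn2real_mono)
qed

theorem theorem7:
  fixes M :: "'a measure"
    and TT :: "real set"
    and Theta :: "(real^'p) set"
    and theta_star :: "real^'p"
    and H :: "real \<Rightarrow> 'a \<Rightarrow> real^'p \<Rightarrow> real"
    and xi :: "real \<Rightarrow> 'a \<Rightarrow> 'p \<Rightarrow> real"
    and pen :: "real \<Rightarrow> real"
    and theta_hat :: "real \<Rightarrow> 'a \<Rightarrow> real^'p"
    and alpha :: "real \<Rightarrow> 'p \<Rightarrow> real"
    and q m :: real
    and Delta :: "'a \<Rightarrow> real^'p"
    and Gamma :: "'a \<Rightarrow> real^'p^'p"
    and psi :: "real^'p"
    and f :: "real^'p \<Rightarrow> real"
  defines "J0 \<equiv> {j. theta_star $ j = 0}"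
    and "J1 \<equiv> {j. theta_star $ j \<noteq> 0}"
    and "F \<equiv> along TT"
    and "Hdag \<equiv> (\<lambda>T \<omega> \<theta>. H T \<omega> \<theta> - (\<Sum>j\<in>UNIV. xi T \<omega> j * pen (\<theta> $ j)))"
    and "u_hat \<equiv> (\<lambda>T \<omega>. \<chi> j. (theta_hat T \<omega> $ j - theta_star $ j) / alpha T j)"
    and "u_tilde \<equiv> (\<lambda>\<omega>. block_inv_apply {j. theta_star $ j \<noteq> 0} (Gamma \<omega>) (Delta \<omega> - psi))"
  assumes M: "prob_space M"
    and TT_nonneg: "TT \<subseteq> {0..}"
    and TT_unbounded: "\<forall>x. \<exists>T\<in>TT. x < T"
    and Theta: "bounded Theta" "open Theta" "theta_star \<in> Theta"
    and H_cont: "\<forall>T\<in>TT. \<forall>\<omega>. continuous_on (closure Theta) (H T \<omega>)"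
    and H_meas: "\<forall>T\<in>TT. \<forall>\<theta>\<in>closure Theta. (\<lambda>\<omega>. H T \<omega> \<theta>) \<in> borel_measurable M"
    and pen: "\<forall>x. pen x \<ge> 0" "pen 0 = 0"
    and xi_pos: "\<forall>T\<in>TT. \<forall>\<omega>\<in>space M. \<forall>j. xi T \<omega> j > 0"
    and xi_meas: "\<forall>T\<in>TT. \<forall>j. (\<lambda>\<omega>. xi T \<omega> j) \<in> borel_measurable M"
    and theta_hat_meas: "\<forall>T\<in>TT. theta_hat T \<in> borel_measurable M"
    and theta_hat_in: "\<forall>T\<in>TT. \<forall>\<omega>\<in>space M. theta_hat T \<omega> \<in> closure Theta"
    and theta_hat_max: "\<forall>T\<in>TT. \<forall>\<omega>\<in>space M. \<forall>\<theta>\<in>closure Theta.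
                          Hdag T \<omega> \<theta> \<le> Hdag T \<omega> (theta_hat T \<omega>)"
    and alpha_nz: "\<forall>T\<in>TT. \<forall>j. alpha T j \<noteq> 0"
    and alpha_lim: "\<forall>j. ((\<lambda>T. alpha T j) \<longlongrightarrow> 0) F"
    and q: "0 < q" "q \<le> 1"
    and m: "m > 0"
    and moment: "(SUP T\<in>TT. \<integral>\<^sup>+ \<omega>. ennreal (norm (u_hat T \<omega>) powr m) \<partial>M) < \<infinity>"
    and A6: "\<forall>j\<in>J0. conv_in_prob M F (\<lambda>T \<omega>. xi T \<omega> j powr (-1/q) / \<bar>alpha T j\<bar>) 0"
    and conv0: "conv_in_prob M F
        (\<lambda>T \<omega>. \<chi> j. if j \<in> J0 then (theta_hat T \<omega> $ j - theta_star $ j) / (xi T \<omega> j powr (-1/q)) else 0) 0"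
    and conv1: "conv_in_distr M F
        (\<lambda>T \<omega>. \<chi> j. if j \<in> J1 then (theta_hat T \<omega> $ j - theta_star $ j) / alpha T j else 0) u_tilde"
    and Delta_meas: "Delta \<in> borel_measurable M"
    and Gamma_meas: "Gamma \<in> borel_measurable M"
    and Gamma_pd: "AE \<omega> in M. transpose (Gamma \<omega>) = Gamma \<omega> \<and>
                      (\<forall>x. x \<noteq> 0 \<longrightarrow> x \<bullet> (Gamma \<omega> *v x) > 0)"
    and f_cont: "continuous_on UNIV f"
    and f_growth: "((\<lambda>u. \<bar>f u\<bar> / norm u powr m) \<longlongrightarrow> 0) at_infinity"
  shows "((\<lambda>T. integral\<^sup>L M (\<lambda>\<omega>. f (u_hat T \<omega>))) \<longlongrightarrow> integral\<^sup>L M (\<lambda>\<omega>. f (u_tilde \<omega>))) F"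
proof -
  have "finite_measure M" using M by (simp add: prob_space_def)
  have "F \<noteq> bot" unfolding F_def using TT_unbounded by (rule along_neq_bot)
  have "eventually (\<lambda>T. T \<in> TT) F" unfolding F_def by (rule eventually_in_along)
  define Z where "Z = (\<lambda>T \<omega>. \<chi> j. if j \<in> J1 then (theta_hat T \<omega> $ j - theta_star $ j) / alpha T j else 0)"
  have regular: "eventually (\<lambda>T. T \<in> TT \<and> u_hat T \<in> borel_measurable M \<and> Z T \<in> borel_measurable M
      \<and> (\<lambda>\<omega>. norm (u_hat T \<omega>) powr m) \<in> borel_measurable M
      \<and> (\<forall>j. (\<lambda>\<omega>. theta_hat T \<omega> $ j - theta_star $ j) \<in> borel_measurable M
         \<and> (\<lambda>\<omega>. xi T \<omega> j powr (-1/q)) \<in> borel_measurable M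
         \<and> (\<forall>\<omega>\<in>space M. 0 < xi T \<omega> j powr (-1/q)))) F"
    using \<open>eventually (\<lambda>T. T \<in> TT) F\<close>
  proof eventually_elim
    case (elim T)
    have [measurable]: "theta_hat T \<in> borel_measurable M" "(\<lambda>\<omega>. xi T \<omega> j) \<in> borel_measurable M" for j
      using theta_hat_meas xi_meas elim by auto
    have "0 < xi T \<omega> j powr (-1/q)" if "\<omega> \<in> space M" for \<omega> j
      using xi_pos[rule_format, OF elim that, of j] by simp
    moreover have "u_hat T \<in> borel_measurable M \<and> Z T \<in> borel_measurable M
        \<and> (\<lambda>\<omega>. norm (u_hat T \<omega>) powr m) \<in> borel_measurable M
        \<and> (\<forall>j. (\<lambda>\<omega>. theta_hat T \<omega> $ j - theta_star $ j) \<in> borel_measurable M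
           \<and> (\<lambda>\<omega>. xi T \<omega> j powr (-1/q)) \<in> borel_measurable M)"
      unfolding u_hat_def Z_def by (intro conjI allI; measurable)
    ultimately show ?case using elim by blast
  qed
  have "(\<lambda>T \<omega>. u_hat T \<omega> - Z T \<omega>)
      = (\<lambda>T \<omega>. \<chi> j. if j \<in> J0 then (theta_hat T \<omega> $ j - theta_star $ j) / alpha T j else 0)"
    unfolding fun_eq_iff vec_eq_iff by (simp add: u_hat_def Z_def J0_def J1_def)
  moreover have "eventually (\<lambda>T. \<forall>j. (\<lambda>\<omega>. theta_hat T \<omega> $ j - theta_star $ j) \<in> borel_measurable M
      \<and> (\<lambda>\<omega>. xi T \<omega> j powr (-1/q)) \<in> borel_measurable M \<and> (\<forall>\<omega>\<in>space M. 0 < xi T \<omega> j powr (-1/q))) F"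
    using regular by eventually_elim blast
  ultimately have close: "conv_in_prob M F (\<lambda>T \<omega>. u_hat T \<omega> - Z T \<omega>) 0"
    using conv_in_prob_rescaled_zero[OF \<open>finite_measure M\<close> conv0 A6] by simp
  obtain C where C: "\<And>T. T \<in> TT \<Longrightarrow> (\<lambda>\<omega>. norm (u_hat T \<omega>) powr m) \<in> borel_measurable M \<Longrightarrow>
      integrable M (\<lambda>\<omega>. norm (u_hat T \<omega>) powr m) \<and> integral\<^sup>L M (\<lambda>\<omega>. norm (u_hat T \<omega>) powr m) \<le> C"
    using integral_bound_if_SUP_nn_integral_finite[OF moment powr_ge_zero] by blast
  have "eventually (\<lambda>T. u_hat T \<in> borel_measurable M \<and> Z T \<in> borel_measurable M
      \<and> integrable M (\<lambda>\<omega>. norm (u_hat T \<omega>) powr m) \<and> integral\<^sup>L M (\<lambda>\<omega>. norm (u_hat T \<omega>) powr m) \<le> C) F"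
    using regular by eventually_elim (use C in blast)
  moreover have "u_tilde \<in> borel_measurable M"
    unfolding u_tilde_def using Gamma_meas Delta_meas by measurable
  ultimately show ?thesis
    using integral_tendsto_if_close_to_conv_in_distr[OF M \<open>F \<noteq> bot\<close> m conv1[folded Z_def] _ close]
      f_cont f_growth by blast
qed

end
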